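(* Let $n\ge3$ be an odd integer. The cycle $C_n$ admits an optimal extended irregular dominating set if and only if there exists a strong starter in $\mathbb{Z}_n$.
   Context: $C_n$ is the cycle on $n$ vertices. In a finite simple graph $\Gamma=(V,E)$ with distance $d$, a vertex $v$ carrying a non-negative integer label $\ell$ dominates (covers) exactly the vertices $u$ with $d(u,v)=\ell$; a vertex labeled $0$ dominates only itself. For $k\ge0$, a $k$-extended irregular dominating set is a set $S\subseteq V$ of $k$ vertices with a labeling $\lambda:S\to\mathbb{Z}_{\ge0}$ with distinct labels, such that every vertex of $V$ is dominated by some vertex of $S$; it is assumed that some vertex of $S$ has label $0$. $\gamma_e(\Gamma)$ is the minimum cardinality of such a set; a $k$-extended irregular dominating set is optimal if $k=\gamma_e(\Gamma)$. For an additive abelian group $G$ of odd order $g$, a starter is a set of unordered pairs $\{\{x_i,y_i\}:1\le i\le (g-1)/2\}$ such that $\{x_i,y_i: 1\le i\le (g-1)/2\}=G\setminus\{0\}$ and $\{\pm(x_i-y_i):1\le i\le (g-1)/2\}=G\setminus\{0\}$; it is strong if moreover the sums $x_i+y_i$ are pairwise distinct and all nonzero. *)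

theory Defs
  imports Main
begin

definition is_walk :: "('a \<Rightarrow> 'a \<Rightarrow> bool) \<Rightarrow> 'a list \<Rightarrow> bool" where
  "is_walk E xs \<longleftrightarrow> (\<forall>i. Suc i < length xs \<longrightarrow> E (xs ! i) (xs ! Suc i))"

text \<open>Graph distance: the least number of edges on a walk from u to v inside V.
  (Only used for connected graphs, where it is well defined.)\<close>
definition gdist :: "'a set \<Rightarrow> ('a \<Rightarrow> 'a \<Rightarrow> bool) \<Rightarrow> 'a \<Rightarrow> 'a \<Rightarrow> nat" where
  "gdist V E u v = (LEAST k. \<exists>xs. length xs = Suc k \<and> hd xs = u \<and> last xs = v
                                 \<and> set xs \<subseteq> V \<and> is_walk E xs)"

definition ext_irr_dom :: "'a set \<Rightarrow> ('a \<Rightarrow> 'a \<Rightarrow> bool) \<Rightarrow> 'a set \<Rightarrow> ('a \<Rightarrow> nat) \<Rightarrow> bool" where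
  "ext_irr_dom V E S lam \<longleftrightarrow>
     S \<subseteq> V \<and> inj_on lam S \<and> (\<exists>v\<in>S. lam v = 0) \<and>
     (\<forall>u\<in>V. \<exists>v\<in>S. gdist V E u v = lam v)"

definition gamma_e :: "'a set \<Rightarrow> ('a \<Rightarrow> 'a \<Rightarrow> bool) \<Rightarrow> nat" where
  "gamma_e V E = (LEAST k. \<exists>S lam. ext_irr_dom V E S lam \<and> card S = k)"

definition optimal_ext_irr_dom :: "'a set \<Rightarrow> ('a \<Rightarrow> 'a \<Rightarrow> bool) \<Rightarrow> 'a set \<Rightarrow> ('a \<Rightarrow> nat) \<Rightarrow> bool" where
  "optimal_ext_irr_dom V E S lam \<longleftrightarrow> ext_irr_dom V E S lam \<and> card S = gamma_e V E"

definition cycle_V :: "nat \<Rightarrow> nat set" where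
  "cycle_V n = {0..<n}"

definition cycle_E :: "nat \<Rightarrow> nat \<Rightarrow> nat \<Rightarrow> bool" where
  "cycle_E n i j \<longleftrightarrow> i < n \<and> j < n \<and> (j = Suc i mod n \<or> i = Suc j mod n)"

definition starter_Zn :: "nat \<Rightarrow> (nat \<Rightarrow> int) \<Rightarrow> (nat \<Rightarrow> int) \<Rightarrow> bool" where
  "starter_Zn n x y \<longleftrightarrow>
     (let I = {1..(n - 1) div 2}; m = int n in
       (\<Union>i\<in>I. {x i mod m, y i mod m}) = {1..<m} \<and>
       (\<Union>i\<in>I. {(x i - y i) mod m, (y i - x i) mod m}) = {1..<m})"

definition strong_starter_Zn :: "nat \<Rightarrow> (nat \<Rightarrow> int) \<Rightarrow> (nat \<Rightarrow> int) \<Rightarrow> bool" where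
  "strong_starter_Zn n x y \<longleftrightarrow>
     starter_Zn n x y \<and>
     (let I = {1..(n - 1) div 2}; m = int n in
       inj_on (\<lambda>i. (x i + y i) mod m) I \<and> (\<forall>i\<in>I. (x i + y i) mod m \<noteq> 0))"

end

theory Submission
  imports Defs "HOL-Number_Theory.Cong"
begin

(* Write n = 2h + 1. On C_n a vertex c labelled l with 1 \<le> l \<le> h dominates exactly the
   two vertices c \<plusminus> l, a vertex labelled 0 only itself, and larger labels nothing. As the
   labels are distinct, the n vertices can only be dominated if every label 1, ..., h occurs and
   the pairs c_l \<plusminus> l cover all vertices except the one labelled 0. After rotating that vertex
   to 0, the pairs {c_l + l, c_l - l} form a starter, since their differences \<plusminus>2l run through
   all nonzero residues, and a strong one, since the sums 2 c_l are distinct and nonzero.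
   Conversely, 2 is invertible mod n, so every pair {x, y} of a strong starter has a centre c
   with 2c = x + y and a label l with 2l = \<plusminus>(x - y), and these centres and labels dominate C_n.
   Finally, any extended irregular dominating set yields an optimal one. *)

section \<open>Residues modulo an odd number\<close>

definition cong_pm :: "int \<Rightarrow> int \<Rightarrow> int \<Rightarrow> int \<Rightarrow> bool" where
  "cong_pm m a b l \<longleftrightarrow> [a = b + l] (mod m) \<or> [a = b - l] (mod m)"

lemma cong_pm_exists:
  fixes a b N :: int
  assumes "N = 2 * int h + 1"
  shows "\<exists>l\<le>h. cong_pm N a b (int l)"
proof -
  define r where "r = (a - b) mod N"
  have "0 < N" using assms by simp
  then have r: "0 \<le> r" "r < N" "[a - b = r] (mod N)"
    by (simp_all add: r_def cong_def)
  show ?thesis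
  proof (cases "r \<le> int h")
    case True
    then have "[a = b + int (nat r)] (mod N)"
      using r by (simp add: cong_iff_dvd_diff algebra_simps)
    then show ?thesis using True by (intro exI[of _ "nat r"]) (auto simp: cong_pm_def)
  next
    case False
    have "N dvd (a - b - r) + N" using r(3) by (simp add: cong_iff_dvd_diff)
    then have "[a = b - int (nat (N - r))] (mod N)"
      using r by (simp add: cong_iff_dvd_diff algebra_simps)
    moreover have "nat (N - r) \<le> h" using False assms by simp
    ultimately show ?thesis by (auto simp: cong_pm_def)
  qed
qed

lemma cong_pm_unique:
  fixes a b N :: int
  assumes N: "N = 2 * int h + 1" and "l \<le> h" "l' \<le> h"
    and "cong_pm N a b (int l)" "cong_pm N a b (int l')"
  shows "l = l'"
proof -
  have "N dvd int l - int l' \<or> N dvd int l + int l'"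
    using assms(4,5) unfolding cong_pm_def cong_iff_dvd_diff
    by (smt (verit) dvd_diff_right_iff)
  then show ?thesis
  proof
    assume "N dvd int l - int l'"
    then have "[int l = int l'] (mod N)" by (simp add: cong_iff_dvd_diff)
    then show ?thesis using cong_less_imp_eq_int[of "int l" N "int l'"] assms(2,3) N by simp
  next
    assume "N dvd int l + int l'"
    then have "int l + int l' = 0"
      using zdvd_imp_le[of N "int l + int l'"] assms(2,3) N by linarith
    then show ?thesis by simp
  qed
qed

lemma cong_mult_2_cancel:
  fixes a b N :: int
  assumes "odd N"
  shows "[2 * a = 2 * b] (mod N) \<longleftrightarrow> [a = b] (mod N)"
  using assms by (simp add: cong_mult_lcancel)

lemma cong_half_iff:
  fixes v w N :: int
  assumes "N = 2 * int h + 1"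
  shows "[(int h + 1) * w = v] (mod N) \<longleftrightarrow> [w = 2 * v] (mod N)"
  unfolding cong_iff_dvd_diff assms
proof
  assume "2 * int h + 1 dvd (int h + 1) * w - v"
  then show "2 * int h + 1 dvd w - 2 * v" by algebra
next
  assume "2 * int h + 1 dvd w - 2 * v"
  moreover have "(int h + 1) * w - v = (int h + 1) * (w - 2 * v) + (2 * int h + 1) * v"
    by (simp add: algebra_simps)
  ultimately show "2 * int h + 1 dvd (int h + 1) * w - v" by simp
qed

lemma cong_half_sum_diff:
  fixes c l x y N :: int
  assumes "odd N" "[2 * c = x + y] (mod N)" "[2 * l = x - y] (mod N)"
  shows "[c + l = x] (mod N)" "[c - l = y] (mod N)"
proof -
  have "[2 * (c + l) = 2 * x] (mod N)" "[2 * (c - l) = 2 * y] (mod N)"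
    using assms(2,3) unfolding cong_iff_dvd_diff by algebra+
  then show "[c + l = x] (mod N)" "[c - l = y] (mod N)"
    using cong_mult_2_cancel[OF assms(1)] by blast+
qed

lemma double_plus_minus_residues:
  assumes N: "N = 2 * int h + 1"
  shows "(\<Union>l\<in>{1..h}. {(2 * int l) mod N, (- (2 * int l)) mod N}) = {1..<N}"
proof
  show "(\<Union>l\<in>{1..h}. {(2 * int l) mod N, (- (2 * int l)) mod N}) \<subseteq> {1..<N}"
  proof (rule UN_least)
    fix l assume "l \<in> {1..h}"
    then have "0 < 2 * int l" "2 * int l < N" using N by auto
    moreover from this have "(- (2 * int l)) mod N = N - 2 * int l"
      by (simp add: zmod_zminus1_eq_if)
    ultimately show "{(2 * int l) mod N, (- (2 * int l)) mod N} \<subseteq> {1..<N}" by auto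
  qed
  show "{1..<N} \<subseteq> (\<Union>l\<in>{1..h}. {(2 * int l) mod N, (- (2 * int l)) mod N})"
  proof
    fix w assume w: "w \<in> {1..<N}"
    obtain l where l: "l \<le> h" "cong_pm N ((int h + 1) * w) 0 (int l)"
      using cong_pm_exists[OF N] by blast
    then have "[w = 2 * (0 + int l)] (mod N) \<or> [w = 2 * (0 - int l)] (mod N)"
      unfolding cong_pm_def by (simp only: cong_half_iff[OF N, symmetric])
    moreover have "w mod N = w" using w by simp
    ultimately have "w = (2 * int l) mod N \<or> w = (- (2 * int l)) mod N"
      unfolding cong_def by auto
    moreover have "l \<noteq> 0"
    proof
      assume "l = 0"
      then show False using calculation w by auto
    qed
    ultimately show "w \<in> (\<Union>l\<in>{1..h}. {(2 * int l) mod N, (- (2 * int l)) mod N})"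
      using l(1) by auto
  qed
qed

section \<open>Distance in an odd cycle\<close>

lemma is_walk_rev:
  assumes sym: "\<And>a b. E a b \<Longrightarrow> E b a" and walk: "is_walk E xs"
  shows "is_walk E (rev xs)"
  unfolding is_walk_def
proof (intro allI impI)
  fix i assume i: "Suc i < length (rev xs)"
  define j where "j = length xs - Suc (Suc i)"
  have "Suc j < length xs" using i by (simp add: j_def)
  then have "E (xs ! j) (xs ! Suc j)" using walk by (simp add: is_walk_def)
  moreover have "rev xs ! i = xs ! Suc j" "rev xs ! Suc i = xs ! j"
    using i by (simp_all add: rev_nth j_def Suc_diff_Suc)
  ultimately show "E (rev xs ! i) (rev xs ! Suc i)" using sym by simp
qed

lemma cycle_E_sym: "cycle_E n a b \<Longrightarrow> cycle_E n b a"
  by (auto simp: cycle_E_def)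

lemma cycle_E_cong:
  assumes "cycle_E n a b"
  shows "[int b = int a + 1] (mod int n) \<or> [int b = int a - 1] (mod int n)"
proof -
  have "b = Suc a mod n \<or> a = Suc b mod n" using assms by (simp add: cycle_E_def)
  then have "[int b = int a + 1] (mod int n) \<or> [int a = int b + 1] (mod int n)"
    by (auto simp: cong_def of_nat_mod add.commute)
  then show ?thesis
    by (auto simp: cong_iff_dvd_diff algebra_simps)
qed

lemma cycle_walk_nth_cong:
  assumes "is_walk (cycle_E n) xs" "i < length xs"
  shows "\<exists>t. \<bar>t\<bar> \<le> int i \<and> [int (xs ! i) = int (xs ! 0) + t] (mod int n)"
  using assms(2)
proof (induction i)
  case 0
  show ?case by (intro exI[of _ 0]) simp
next
  case (Suc i)
  then obtain t where t: "\<bar>t\<bar> \<le> int i" "[int (xs ! i) = int (xs ! 0) + t] (mod int n)"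
    by auto
  have "cycle_E n (xs ! i) (xs ! Suc i)" using assms(1) Suc.prems by (simp add: is_walk_def)
  then consider (up) "[int (xs ! Suc i) = int (xs ! i) + 1] (mod int n)"
    | (down) "[int (xs ! Suc i) = int (xs ! i) - 1] (mod int n)"
    using cycle_E_cong by blast
  then show ?case
  proof cases
    case up
    also have "[int (xs ! i) + 1 = int (xs ! 0) + (t + 1)] (mod int n)"
      using cong_add[OF t(2) cong_refl, of 1] by (simp add: add.assoc)
    finally show ?thesis using t(1) by (intro exI[of _ "t + 1"]) auto
  next
    case down
    also have "[int (xs ! i) - 1 = int (xs ! 0) + (t - 1)] (mod int n)"
      using cong_diff[OF t(2) cong_refl, of 1] by (simp add: add_diff_eq)
    finally show ?thesis using t(1) by (intro exI[of _ "t - 1"]) auto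
  qed
qed

lemma cycle_walk_exists:
  assumes "0 < n" "u < n" "v < n" "cong_pm (int n) (int v) (int u) (int k)"
  shows "\<exists>xs. length xs = Suc k \<and> hd xs = u \<and> last xs = v \<and> set xs \<subseteq> cycle_V n
              \<and> is_walk (cycle_E n) xs"
proof -
  have forward: "\<exists>xs. length xs = Suc k \<and> hd xs = a \<and> last xs = b \<and> set xs \<subseteq> cycle_V n
                   \<and> is_walk (cycle_E n) xs"
    if "a < n" "b < n" "[int b = int a + int k] (mod int n)" for a b
  proof (intro exI conjI)
    let ?xs = "map (\<lambda>i. (a + i) mod n) [0..<Suc k]"
    have "[b = a + k] (mod n)" using that(3) by (simp add: cong_int_iff[symmetric])
    then show "last ?xs = b" using that(2) by (simp add: cong_def last_map del: upt_Suc)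
    show "length ?xs = Suc k" "hd ?xs = a" "set ?xs \<subseteq> cycle_V n"
      using assms(1) that(1) by (auto simp: hd_map cycle_V_def simp del: upt_Suc)
    show "is_walk (cycle_E n) ?xs"
      using assms(1) by (auto simp: is_walk_def cycle_E_def mod_Suc_eq nth_append simp del: upt_Suc)
  qed
  have "[int v = int u + int k] (mod int n) \<or> [int u = int v + int k] (mod int n)"
    using assms(4) by (auto simp: cong_pm_def cong_iff_dvd_diff algebra_simps)
  then show ?thesis
  proof
    assume "[int v = int u + int k] (mod int n)"
    then show ?thesis using forward assms(2,3) by blast
  next
    assume "[int u = int v + int k] (mod int n)"
    then obtain xs where "length xs = Suc k" "hd xs = v" "last xs = u" "set xs \<subseteq> cycle_V n"
      "is_walk (cycle_E n) xs"
      using forward assms(2,3) by blast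
    then show ?thesis
      by (intro exI[of _ "rev xs"]) (auto simp: hd_rev last_rev is_walk_rev cycle_E_sym)
  qed
qed

lemma gdist_cycle_eq_iff:
  assumes "odd n" "u < n" "v < n"
  shows "gdist (cycle_V n) (cycle_E n) u v = l \<longleftrightarrow>
           l \<le> (n - 1) div 2 \<and> cong_pm (int n) (int u) (int v) (int l)"
proof -
  define h where "h = (n - 1) div 2"
  have N: "int n = 2 * int h + 1" using assms(1) by (auto simp: h_def elim!: oddE)
  let ?walk = "\<lambda>k. \<exists>xs. length xs = Suc k \<and> hd xs = u \<and> last xs = v \<and> set xs \<subseteq> cycle_V n
                       \<and> is_walk (cycle_E n) xs"
  have gdist: "gdist (cycle_V n) (cycle_E n) u v = l"
    if l: "l \<le> h" "cong_pm (int n) (int u) (int v) (int l)" for l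
    unfolding gdist_def
  proof (rule Least_equality)
    have "cong_pm (int n) (int v) (int u) (int l)"
      using l(2) by (auto simp: cong_pm_def cong_iff_dvd_diff algebra_simps)
    then show "?walk l" using cycle_walk_exists assms(2,3) N by simp
  next
    fix k assume "?walk k"
    then obtain xs where xs: "length xs = Suc k" "hd xs = u" "last xs = v" "is_walk (cycle_E n) xs"
      by blast
    have "xs \<noteq> []" using xs(1) by auto
    then have "hd xs = xs ! 0" "last xs = xs ! k"
      using xs(1) by (simp_all add: hd_conv_nth last_conv_nth)
    then obtain t where t: "\<bar>t\<bar> \<le> int k" "[int v = int u + t] (mod int n)"
      using cycle_walk_nth_cong[OF xs(4), of k] xs by auto
    show "l \<le> k"
    proof (cases "nat \<bar>t\<bar> \<le> h")
      case True
      have "cong_pm (int n) (int u) (int v) (int (nat \<bar>t\<bar>))"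
        using t(2) by (cases "t \<ge> 0") (auto simp: cong_pm_def cong_iff_dvd_diff algebra_simps)
      then have "l = nat \<bar>t\<bar>" using cong_pm_unique[OF N l(1) True l(2)] by blast
      then show ?thesis using t(1) by simp
    next
      case False
      then show ?thesis using t(1) l(1) by simp
    qed
  qed
  obtain l' where "l' \<le> h" "cong_pm (int n) (int u) (int v) (int l')"
    using cong_pm_exists[OF N] by blast
  with gdist show ?thesis unfolding h_def[symmetric] by metis
qed

section \<open>Dominating sets of odd cycles\<close>

lemma card_le_pair_cover:
  assumes "finite A" "finite L" "\<And>l. l \<in> L \<Longrightarrow> finite (P l) \<and> card (P l) \<le> 2"
    and "V \<subseteq> A \<union> (\<Union>l\<in>L. P l)"
  shows "card V \<le> card A + 2 * card L"
proof -
  have "card V \<le> card (A \<union> (\<Union>l\<in>L. P l))" using assms by (intro card_mono) auto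
  also have "\<dots> \<le> card A + card (\<Union>l\<in>L. P l)" by (rule card_Un_le)
  also have "card (\<Union>l\<in>L. P l) \<le> (\<Sum>l\<in>L. card (P l))" using assms(2) by (rule card_UN_le)
  also have "\<dots> \<le> (\<Sum>l\<in>L. 2)" using assms(3) by (intro sum_mono) auto
  finally show ?thesis by simp
qed

lemma ext_irr_dom_cycle_cover:
  assumes "odd n" and dom: "ext_irr_dom (cycle_V n) (cycle_E n) S lam"
    and "v0 \<in> S" "lam v0 = 0" "u < n"
  shows "u = v0 \<or>
    (\<exists>v\<in>S. lam v \<in> {1..(n - 1) div 2} \<and> cong_pm (int n) (int u) (int v) (int (lam v)))"
proof -
  have "u \<in> cycle_V n" using assms(5) by (simp add: cycle_V_def)
  then obtain v where v: "v \<in> S" "gdist (cycle_V n) (cycle_E n) u v = lam v"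
    using dom unfolding ext_irr_dom_def by blast
  have "v < n" using dom v(1) by (auto simp: ext_irr_dom_def cycle_V_def)
  then have lam_v: "lam v \<le> (n - 1) div 2" and cong: "cong_pm (int n) (int u) (int v) (int (lam v))"
    using v(2) gdist_cycle_eq_iff[OF assms(1,5)] by blast+
  show ?thesis
  proof (cases "lam v = 0")
    case True
    then have "u = v"
      using cong cong_less_imp_eq_int[of "int u" "int n" "int v"] \<open>v < n\<close> assms(5)
      by (simp add: cong_pm_def)
    moreover have "v = v0"
      using dom True v(1) assms(3,4) unfolding ext_irr_dom_def by (metis inj_onD)
    ultimately show ?thesis by simp
  next
    case False
    then show ?thesis using v(1) lam_v cong by auto
  qed
qed

lemma card_cycle_cong_pm_le_2: "card {u \<in> cycle_V n. cong_pm (int n) (int u) b l} \<le> 2"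
proof -
  have sub: "{u \<in> cycle_V n. cong_pm (int n) (int u) b l} \<subseteq> {nat ((b + l) mod int n), nat ((b - l) mod int n)}"
    by (auto simp: cycle_V_def cong_pm_def cong_def)
  have "card {nat ((b + l) mod int n), nat ((b - l) mod int n)} \<le> 2" by (simp add: card_insert_if)
  then show ?thesis using card_mono[OF _ sub] by simp
qed

text \<open>Each label 1, ..., h dominates at most two vertices, so the n = 2h + 1 vertices leave
  no slack.\<close>
lemma ext_irr_dom_cycle_tight:
  assumes "odd n" and dom: "ext_irr_dom (cycle_V n) (cycle_E n) S lam"
    and "v0 \<in> S" "lam v0 = 0"
  shows "{1..(n - 1) div 2} \<subseteq> lam ` S"
    and "\<And>v. v \<in> S \<Longrightarrow> lam v \<in> {1..(n - 1) div 2} \<Longrightarrow>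
           \<not> cong_pm (int n) (int v0) (int v) (int (lam v))"
proof -
  define h where "h = (n - 1) div 2"
  have n: "n = 2 * h + 1" using assms(1) by (auto simp: h_def elim!: oddE)
  define S' where "S' = {v \<in> S. lam v \<in> {1..h}}"
  define P where "P v = {u \<in> cycle_V n. cong_pm (int n) (int u) (int v) (int (lam v))}" for v
  have fin_S': "finite S'"
    using dom by (auto simp: S'_def ext_irr_dom_def cycle_V_def intro: finite_subset)
  have "inj_on lam S'"
    using dom by (auto simp: ext_irr_dom_def S'_def intro: inj_on_subset)
  then have card_S': "card S' = card (lam ` S')" by (simp add: card_image)
  have lam_S': "lam ` S' \<subseteq> {1..h}" by (auto simp: S'_def)
  then have "card S' \<le> h" using card_S' card_mono[of "{1..h}" "lam ` S'"] by simp
  have P: "finite (P v) \<and> card (P v) \<le> 2" for v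
    using card_cycle_cong_pm_le_2 by (simp add: P_def cycle_V_def)
  have cover: "cycle_V n \<subseteq> {v0} \<union> (\<Union>v\<in>S'. P v)"
  proof
    fix u assume u: "u \<in> cycle_V n"
    then have "u < n" by (simp add: cycle_V_def)
    from ext_irr_dom_cycle_cover[OF assms this] show "u \<in> {v0} \<union> (\<Union>v\<in>S'. P v)"
      using u unfolding S'_def P_def h_def by blast
  qed
  have "n \<le> 1 + 2 * card S'"
    using card_le_pair_cover[OF _ fin_S' P cover] by (simp add: cycle_V_def)
  then have "card (lam ` S') = card {1..h}" using \<open>card S' \<le> h\<close> card_S' n by simp
  then have "lam ` S' = {1..h}" using lam_S' by (intro card_subset_eq) auto
  then show "{1..(n - 1) div 2} \<subseteq> lam ` S" by (auto simp: S'_def h_def)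
  fix v assume "v \<in> S" "lam v \<in> {1..(n - 1) div 2}"
  then have "v \<in> S'" by (simp add: S'_def h_def)
  show "\<not> cong_pm (int n) (int v0) (int v) (int (lam v))"
  proof
    assume "cong_pm (int n) (int v0) (int v) (int (lam v))"
    then have "v0 \<in> P v" using dom assms(3) by (auto simp: P_def ext_irr_dom_def)
    then have "cycle_V n \<subseteq> {} \<union> (\<Union>v\<in>S'. P v)" using cover \<open>v \<in> S'\<close> by blast
    from card_le_pair_cover[OF _ fin_S' P this] have "n \<le> 2 * card S'"
      by (simp add: cycle_V_def)
    then show False using \<open>card S' \<le> h\<close> n by simp
  qed
qed

text \<open>Both sides of the equivalence reduce to this configuration: v0 carries label 0 and c l
  carries label l.\<close>
definition centred_pair_cover :: "nat \<Rightarrow> nat \<Rightarrow> (nat \<Rightarrow> nat) \<Rightarrow> bool" where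
  "centred_pair_cover n v0 c \<longleftrightarrow> v0 < n \<and> inj_on c {1..(n - 1) div 2} \<and>
     (\<forall>l\<in>{1..(n - 1) div 2}. c l < n \<and> c l \<noteq> v0) \<and>
     (\<forall>u<n. u \<noteq> v0 \<longleftrightarrow>
        (\<exists>l\<in>{1..(n - 1) div 2}. cong_pm (int n) (int u) (int (c l)) (int l)))"

lemma ext_irr_dom_imp_centred_pair_cover:
  assumes "odd n" and dom: "ext_irr_dom (cycle_V n) (cycle_E n) S lam"
  shows "\<exists>v0 c. centred_pair_cover n v0 c"
proof -
  define I where "I = {1..(n - 1) div 2}"
  obtain v0 where v0: "v0 \<in> S" "lam v0 = 0" using dom by (auto simp: ext_irr_dom_def)
  have inj: "inj_on lam S" and S_lt: "\<And>v. v \<in> S \<Longrightarrow> v < n"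
    using dom by (auto simp: ext_irr_dom_def cycle_V_def)
  define c where "c = the_inv_into S lam"
  have c: "c l \<in> S" "lam (c l) = l" if "l \<in> I" for l
    using ext_irr_dom_cycle_tight(1)[OF assms v0] that inj
    by (auto simp: c_def I_def the_inv_into_into f_the_inv_into_f)
  have "inj_on c I" by (metis c(2) inj_onI)
  moreover have "c l < n \<and> c l \<noteq> v0" if "l \<in> I" for l
    using c[OF that] S_lt v0(2) that by (auto simp: I_def)
  moreover have "u \<noteq> v0 \<longleftrightarrow> (\<exists>l\<in>I. cong_pm (int n) (int u) (int (c l)) (int l))"
    if u: "u < n" for u
  proof
    assume "u \<noteq> v0"
    then obtain v where "v \<in> S" "lam v \<in> I" "cong_pm (int n) (int u) (int v) (int (lam v))"
      using ext_irr_dom_cycle_cover[OF assms v0 u] by (auto simp: I_def)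
    moreover have "c (lam v) = v" using inj \<open>v \<in> S\<close> by (simp add: c_def the_inv_into_f_f)
    ultimately show "\<exists>l\<in>I. cong_pm (int n) (int u) (int (c l)) (int l)" by metis
  next
    assume "\<exists>l\<in>I. cong_pm (int n) (int u) (int (c l)) (int l)"
    then show "u \<noteq> v0" using ext_irr_dom_cycle_tight(2)[OF assms v0] c by (fastforce simp: I_def)
  qed
  ultimately show ?thesis using S_lt[OF v0(1)] unfolding centred_pair_cover_def I_def by blast
qed

lemma centred_pair_cover_imp_ext_irr_dom:
  assumes "odd n" and cover: "centred_pair_cover n v0 c"
  shows "\<exists>S lam. ext_irr_dom (cycle_V n) (cycle_E n) S lam"
proof -
  define I where "I = {1..(n - 1) div 2}"
  have "v0 < n" and inj: "inj_on c I" and c: "\<And>l. l \<in> I \<Longrightarrow> c l < n \<and> c l \<noteq> v0"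
    and covered: "\<And>u. u < n \<Longrightarrow> u \<noteq> v0 \<Longrightarrow>
                     \<exists>l\<in>I. cong_pm (int n) (int u) (int (c l)) (int l)"
    using cover by (auto simp: centred_pair_cover_def I_def)
  define lam where "lam v = (if v = v0 then 0 else the_inv_into I c v)" for v
  have lam_c: "lam (c l) = l" if "l \<in> I" for l
    using c[OF that] inj that by (simp add: lam_def the_inv_into_f_f)
  have "ext_irr_dom (cycle_V n) (cycle_E n) (insert v0 (c ` I)) lam"
    unfolding ext_irr_dom_def
  proof (intro conjI ballI)
    show "insert v0 (c ` I) \<subseteq> cycle_V n" using \<open>v0 < n\<close> c by (auto simp: cycle_V_def)
    have "inj_on (lam \<circ> c) I" by (simp add: inj_on_def lam_c)
    then have "inj_on lam (c ` I)" by (rule inj_on_imageI)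
    moreover have "lam v0 \<notin> lam ` c ` I" by (auto simp: lam_c) (simp add: lam_def I_def)
    ultimately show "inj_on lam (insert v0 (c ` I))" by auto
    show "\<exists>v\<in>insert v0 (c ` I). lam v = 0" by (simp add: lam_def)
    fix u assume "u \<in> cycle_V n"
    then have "u < n" by (simp add: cycle_V_def)
    show "\<exists>v\<in>insert v0 (c ` I). gdist (cycle_V n) (cycle_E n) u v = lam v"
    proof (cases "u = v0")
      case True
      then have "gdist (cycle_V n) (cycle_E n) u v0 = 0"
        using gdist_cycle_eq_iff[OF assms(1) \<open>u < n\<close> \<open>v0 < n\<close>] by (simp add: cong_pm_def)
      then show ?thesis by (simp add: lam_def)
    next
      case False
      then obtain l where l: "l \<in> I" "cong_pm (int n) (int u) (int (c l)) (int l)"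
        using covered \<open>u < n\<close> by blast
      then have "gdist (cycle_V n) (cycle_E n) u (c l) = lam (c l)"
        using gdist_cycle_eq_iff[OF assms(1) \<open>u < n\<close>] c lam_c by (simp add: I_def)
      then show ?thesis using l(1) by blast
    qed
  qed
  then show ?thesis by blast
qed

section \<open>Starters\<close>

lemma centred_pair_cover_residues:
  assumes cover: "centred_pair_cover n v0 c"
  defines "N \<equiv> int n" and "I \<equiv> {1..(n - 1) div 2}"
  shows "(\<Union>l\<in>I. {(int (c l) + int l - int v0) mod N, (int (c l) - int l - int v0) mod N}) = {1..<N}"
proof -
  have "v0 < n"
    and covered: "\<And>u. u < n \<Longrightarrow> u \<noteq> v0 \<longleftrightarrow> (\<exists>l\<in>I. cong_pm N (int u) (int (c l)) (int l))"
    using cover by (auto simp: centred_pair_cover_def I_def N_def)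
  have N0: "0 < N" using \<open>v0 < n\<close> by (simp add: N_def)
  show ?thesis
  proof
    show "(\<Union>l\<in>I. {(int (c l) + int l - int v0) mod N, (int (c l) - int l - int v0) mod N}) \<subseteq> {1..<N}"
    proof (rule UN_least)
      fix l assume "l \<in> I"
      then have "\<not> cong_pm N (int v0) (int (c l)) (int l)" using covered[OF \<open>v0 < n\<close>] by blast
      then have "(int (c l) + int l - int v0) mod N \<noteq> 0" "(int (c l) - int l - int v0) mod N \<noteq> 0"
        by (auto simp: cong_pm_def cong_iff_dvd_diff dvd_diff_commute)
      moreover have "k mod N \<in> {1..<N}" if "k mod N \<noteq> 0" for k
      proof -
        have "0 \<le> k mod N" "k mod N < N" using N0 by simp_all
        then show ?thesis using that by simp
      qed
      ultimately show "{(int (c l) + int l - int v0) mod N, (int (c l) - int l - int v0) mod N} \<subseteq> {1..<N}"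
        by simp
    qed
    show "{1..<N} \<subseteq> (\<Union>l\<in>I. {(int (c l) + int l - int v0) mod N, (int (c l) - int l - int v0) mod N})"
    proof
      fix w assume w: "w \<in> {1..<N}"
      define u where "u = nat ((w + int v0) mod N)"
      have u_eq: "int u = (w + int v0) mod N" using N0 by (simp add: u_def)
      then have "u < n" using pos_mod_bound[OF N0, of "w + int v0"] unfolding N_def by linarith
      have u: "[int u = w + int v0] (mod N)" using u_eq by (simp add: cong_def)
      have "u \<noteq> v0"
      proof
        assume "u = v0"
        then have "N dvd w" using u by (simp add: cong_iff_dvd_diff)
        then show False using zdvd_imp_le[of N w] w by simp
      qed
      then obtain l where "l \<in> I" "cong_pm N (int u) (int (c l)) (int l)"
        using covered[OF \<open>u < n\<close>] by blast
      then have "[w = int (c l) + int l - int v0] (mod N) \<or> [w = int (c l) - int l - int v0] (mod N)"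
        using u unfolding cong_pm_def cong_iff_dvd_diff by (smt (verit) dvd_diff_right_iff)
      moreover have "w mod N = w" using w by simp
      ultimately show "w \<in> (\<Union>l\<in>I. {(int (c l) + int l - int v0) mod N, (int (c l) - int l - int v0) mod N})"
        using \<open>l \<in> I\<close> unfolding cong_def by force
    qed
  qed
qed

lemma centred_pair_cover_imp_strong_starter:
  assumes "odd n" and cover: "centred_pair_cover n v0 c"
  shows "strong_starter_Zn n (\<lambda>l. int (c l) + int l - int v0) (\<lambda>l. int (c l) - int l - int v0)"
proof -
  define h where "h = (n - 1) div 2"
  define N where "N = int n"
  define I where "I = {1..h}"
  have N: "N = 2 * int h + 1" using assms(1) by (auto simp: N_def h_def elim!: oddE)
  have "v0 < n" and inj: "inj_on c I" and c: "\<And>l. l \<in> I \<Longrightarrow> c l < n \<and> c l \<noteq> v0"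
    using cover by (auto simp: centred_pair_cover_def I_def h_def)
  have sum_cong: "c l = v"
    if "l \<in> I" "v < n" "[2 * (int (c l) - int v0) = 2 * (int v - int v0)] (mod N)" for l v
  proof -
    have "odd N" using N by simp
    then have "[int (c l) - int v0 = int v - int v0] (mod N)"
      using that(3) cong_mult_2_cancel by blast
    then have "[int (c l) = int v] (mod N)" by (simp add: cong_iff_dvd_diff)
    then show ?thesis using c[OF that(1)] that(2) by (simp add: N_def cong_int_iff cong_def)
  qed
  have "inj_on (\<lambda>l. (2 * (int (c l) - int v0)) mod N) I"
  proof (rule inj_onI)
    fix l l' assume "l \<in> I" "l' \<in> I" "(2 * (int (c l) - int v0)) mod N = (2 * (int (c l') - int v0)) mod N"
    then have "c l = c l'" using sum_cong c by (simp add: cong_def)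
    then show "l = l'" using inj \<open>l \<in> I\<close> \<open>l' \<in> I\<close> by (simp add: inj_on_eq_iff)
  qed
  moreover have "(2 * (int (c l) - int v0)) mod N \<noteq> 0" if "l \<in> I" for l
  proof
    assume "(2 * (int (c l) - int v0)) mod N = 0"
    then have "c l = v0" using sum_cong[OF that \<open>v0 < n\<close>] by (simp add: cong_def)
    then show False using c[OF that] by simp
  qed
  moreover have "(\<Union>l\<in>I. {(2 * int l) mod N, (- (2 * int l)) mod N}) = {1..<N}"
    using double_plus_minus_residues[OF N] by (simp add: I_def)
  ultimately show ?thesis
    using centred_pair_cover_residues[OF cover]
    by (simp add: strong_starter_Zn_def starter_Zn_def Let_def N_def h_def I_def algebra_simps)
qed

lemma starter_half_differences:
  assumes "odd n" "starter_Zn n x y"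
  defines "I \<equiv> {1..(n - 1) div 2}"
  obtains lab where "bij_betw lab I I"
    "\<And>i. i \<in> I \<Longrightarrow>
       [x i - y i = 2 * int (lab i)] (mod int n) \<or> [y i - x i = 2 * int (lab i)] (mod int n)"
proof -
  define h where "h = (n - 1) div 2"
  define N where "N = int n"
  have N: "N = 2 * int h + 1" using assms(1) by (auto simp: N_def h_def elim!: oddE)
  have diffs: "(\<Union>i\<in>I. {(x i - y i) mod N, (y i - x i) mod N}) = {1..<N}"
    using assms(2) by (simp add: starter_Zn_def Let_def N_def I_def)
  let ?half = "\<lambda>i l. cong_pm N ((int h + 1) * (x i - y i)) 0 (int l)"
  have half_iff: "?half i l \<longleftrightarrow> [x i - y i = 2 * int l] (mod N) \<or> [y i - x i = 2 * int l] (mod N)"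
    for i l
    unfolding cong_pm_def cong_half_iff[OF N]
    by (auto simp: cong_iff_dvd_diff algebra_simps dvd_diff_commute)
  have "\<exists>l\<in>I. ?half i l" if "i \<in> I" for i
  proof -
    obtain l where l: "l \<le> h" "?half i l" using cong_pm_exists[OF N] by blast
    have "(x i - y i) mod N \<in> {1..<N}" unfolding diffs[symmetric] using that by blast
    moreover have "l \<noteq> 0"
    proof
      assume "l = 0"
      then have "[x i - y i = 0] (mod N) \<or> [y i - x i = 0] (mod N)" using l(2) half_iff[of i l] by simp
      then show False using calculation by (auto simp: cong_0_iff dvd_diff_commute)
    qed
    then show ?thesis using l by (auto simp: I_def h_def)
  qed
  then obtain lab where lab: "\<And>i. i \<in> I \<Longrightarrow> lab i \<in> I \<and> ?half i (lab i)" by metis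
  have "lab ` I = I"
  proof
    show "lab ` I \<subseteq> I" using lab by blast
    show "I \<subseteq> lab ` I"
    proof
      fix l assume l: "l \<in> I"
      then have "0 < 2 * int l" "2 * int l < N" using N by (auto simp: I_def h_def)
      then have "(2 * int l) mod N \<in> {1..<N}" by simp
      then obtain i where "i \<in> I"
        "[x i - y i = 2 * int l] (mod N) \<or> [y i - x i = 2 * int l] (mod N)"
        unfolding diffs[symmetric] cong_def by auto
      then have i: "i \<in> I" "?half i l" using half_iff by blast+
      have "l = lab i"
        using cong_pm_unique[OF N _ _ i(2)] lab[OF i(1)] l by (auto simp: I_def h_def)
      then show "l \<in> lab ` I" using i(1) by blast
    qed
  qed
  then have "bij_betw lab I I"
    by (simp add: bij_betw_def eq_card_imp_inj_on I_def)
  then show ?thesis using that lab half_iff by (auto simp: N_def)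
qed

lemma strong_starter_centres:
  assumes "odd n" and starter: "strong_starter_Zn n x y"
  defines "N \<equiv> int n" and "I \<equiv> {1..(n - 1) div 2}"
  obtains c lab where "bij_betw lab I I" "inj_on c I" "\<And>i. i \<in> I \<Longrightarrow> c i < n \<and> c i \<noteq> 0"
    "\<And>i u. i \<in> I \<Longrightarrow>
       cong_pm N u (int (c i)) (int (lab i)) \<longleftrightarrow> [u = x i] (mod N) \<or> [u = y i] (mod N)"
proof -
  define h where "h = (n - 1) div 2"
  have N: "N = 2 * int h + 1" using assms(1) by (auto simp: N_def h_def elim!: oddE)
  then have N0: "0 < N" by simp
  have sums_inj: "inj_on (\<lambda>i. (x i + y i) mod N) I"
    and sums_nonzero: "\<forall>i\<in>I. (x i + y i) mod N \<noteq> 0"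
    using starter by (simp_all add: strong_starter_Zn_def Let_def N_def I_def)
  obtain lab where lab_bij: "bij_betw lab I I"
    and lab: "\<And>i. i \<in> I \<Longrightarrow>
                [x i - y i = 2 * int (lab i)] (mod N) \<or> [y i - x i = 2 * int (lab i)] (mod N)"
    using starter_half_differences[OF assms(1)] starter
    by (auto simp: strong_starter_Zn_def N_def I_def)
  \<comment> \<open>the centre of the pair {x i, y i}\<close>
  define c where "c i = nat (((int h + 1) * (x i + y i)) mod N)" for i
  have c_int: "int (c i) = ((int h + 1) * (x i + y i)) mod N" for i using N0 by (simp add: c_def)
  then have "c i < n" for i using pos_mod_bound[OF N0] unfolding N_def by (metis of_nat_less_iff)
  have c_double: "[x i + y i = 2 * int (c i)] (mod N)" for i
  proof -
    have "[(int h + 1) * (x i + y i) = int (c i)] (mod N)" by (simp add: c_int cong_def)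
    then show ?thesis by (simp add: cong_half_iff[OF N])
  qed
  have "c i \<noteq> 0" if "i \<in> I" for i
  proof
    assume "c i = 0"
    then show False using c_double[of i] sums_nonzero that by (simp add: cong_def)
  qed
  moreover have "inj_on c I"
  proof (rule inj_onI)
    fix i j assume "i \<in> I" "j \<in> I" "c i = c j"
    then have "(x i + y i) mod N = (x j + y j) mod N"
      using c_double[of i] c_double[of j] by (simp add: cong_def)
    then show "i = j" using sums_inj \<open>i \<in> I\<close> \<open>j \<in> I\<close> by (auto dest: inj_onD)
  qed
  moreover have "cong_pm N u (int (c i)) (int (lab i)) \<longleftrightarrow> [u = x i] (mod N) \<or> [u = y i] (mod N)"
    if "i \<in> I" for i u
  proof -
    have "odd N" using N by simp
    have "[2 * int (c i) = x i + y i] (mod N)" "[2 * int (c i) = y i + x i] (mod N)"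
      using c_double[of i] by (simp_all add: cong_sym_eq add.commute)
    with lab[OF that] have "[int (c i) + int (lab i) = x i] (mod N) \<and> [int (c i) - int (lab i) = y i] (mod N)
        \<or> [int (c i) + int (lab i) = y i] (mod N) \<and> [int (c i) - int (lab i) = x i] (mod N)"
      using cong_half_sum_diff[OF \<open>odd N\<close>] by (metis cong_sym)
    then show ?thesis unfolding cong_pm_def by (meson cong_sym cong_trans)
  qed
  ultimately show ?thesis using that lab_bij \<open>\<And>i. c i < n\<close> by blast
qed

lemma strong_starter_imp_centred_pair_cover:
  assumes "odd n" and starter: "strong_starter_Zn n x y"
  shows "\<exists>c. centred_pair_cover n 0 c"
proof -
  define N where "N = int n"
  define I where "I = {1..(n - 1) div 2}"
  have points: "(\<Union>i\<in>I. {x i mod N, y i mod N}) = {1..<N}"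
    using starter by (simp add: strong_starter_Zn_def starter_Zn_def Let_def N_def I_def)
  obtain c lab where lab: "bij_betw lab I I" and "inj_on c I"
    and c: "\<And>i. i \<in> I \<Longrightarrow> c i < n \<and> c i \<noteq> 0"
    and pair: "\<And>i u. i \<in> I \<Longrightarrow>
                 cong_pm N u (int (c i)) (int (lab i)) \<longleftrightarrow> [u = x i] (mod N) \<or> [u = y i] (mod N)"
    using strong_starter_centres[OF assms] unfolding N_def I_def by metis
  define lab' where "lab' = the_inv_into I lab"
  have lab': "lab' l \<in> I" "lab (lab' l) = l" if "l \<in> I" for l
    using lab that by (auto simp: lab'_def bij_betw_def the_inv_into_into f_the_inv_into_f)
  have "inj_on lab' I" by (rule inj_onI) (metis lab'(2))
  moreover have "inj_on c (lab' ` I)" using \<open>inj_on c I\<close> lab'(1) by (auto intro: inj_on_subset)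
  ultimately have "inj_on (c \<circ> lab') I" by (rule comp_inj_on)
  moreover have "u \<noteq> 0 \<longleftrightarrow> (\<exists>l\<in>I. cong_pm N (int u) (int ((c \<circ> lab') l)) (int l))"
    if "u < n" for u
  proof
    assume "u \<noteq> 0"
    then have "int u \<in> {1..<N}" using that by (simp add: N_def)
    then obtain i where i: "i \<in> I" "[int u = x i] (mod N) \<or> [int u = y i] (mod N)"
      unfolding points[symmetric] by (auto simp: cong_def)
    moreover have "lab' (lab i) = i" using lab i(1) by (simp add: lab'_def bij_betw_def the_inv_into_f_f)
    ultimately show "\<exists>l\<in>I. cong_pm N (int u) (int ((c \<circ> lab') l)) (int l)"
      using pair lab by (metis bij_betwE comp_apply)
  next
    assume "\<exists>l\<in>I. cong_pm N (int u) (int ((c \<circ> lab') l)) (int l)"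
    then obtain i where "i \<in> I" "[int u = x i] (mod N) \<or> [int u = y i] (mod N)"
      using pair lab' by (metis comp_apply)
    moreover have "x i mod N \<in> {1..<N}" "y i mod N \<in> {1..<N}"
      unfolding points[symmetric] using \<open>i \<in> I\<close> by blast+
    ultimately show "u \<noteq> 0" by (cases "u = 0") (auto simp: cong_def)
  qed
  moreover have "\<forall>l\<in>I. (c \<circ> lab') l < n \<and> (c \<circ> lab') l \<noteq> 0" using c lab'(1) by simp
  ultimately have "centred_pair_cover n 0 (c \<circ> lab')"
    using odd_pos[OF assms(1)] unfolding centred_pair_cover_def N_def[symmetric] I_def[symmetric]
    by blast
  then show ?thesis by blast
qed

lemma ext_irr_dom_imp_optimal:
  assumes "ext_irr_dom V E S lam"
  shows "\<exists>S lam. optimal_ext_irr_dom V E S lam"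
proof -
  let ?dom = "\<lambda>k. \<exists>S lam. ext_irr_dom V E S lam \<and> card S = k"
  have "?dom (card S)" using assms by blast
  then have "?dom (LEAST k. ?dom k)" by (rule LeastI)
  then show ?thesis unfolding optimal_ext_irr_dom_def gamma_e_def by blast
qed

theorem proposition4p5:
  fixes n :: nat
  assumes "odd n" and "n \<ge> 3"
  shows "(\<exists>S lam. optimal_ext_irr_dom (cycle_V n) (cycle_E n) S lam)
         \<longleftrightarrow> (\<exists>x y. strong_starter_Zn n x y)"
proof
  assume "\<exists>S lam. optimal_ext_irr_dom (cycle_V n) (cycle_E n) S lam"
  then obtain S lam where "ext_irr_dom (cycle_V n) (cycle_E n) S lam"
    by (auto simp: optimal_ext_irr_dom_def)
  then obtain v0 c where "centred_pair_cover n v0 c"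
    using ext_irr_dom_imp_centred_pair_cover[OF assms(1)] by blast
  then show "\<exists>x y. strong_starter_Zn n x y"
    using centred_pair_cover_imp_strong_starter[OF assms(1)] by blast
next
  assume "\<exists>x y. strong_starter_Zn n x y"
  then obtain c where "centred_pair_cover n 0 c"
    using strong_starter_imp_centred_pair_cover[OF assms(1)] by blast
  then obtain S lam where "ext_irr_dom (cycle_V n) (cycle_E n) S lam"
    using centred_pair_cover_imp_ext_irr_dom[OF assms(1)] by blast
  then show "\<exists>S lam. optimal_ext_irr_dom (cycle_V n) (cycle_E n) S lam"
    by (rule ext_irr_dom_imp_optimal)
qed

end
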